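(* Let $X$ be a bipartite distance-regular graph of diameter $3$ on $n$ vertices. If $X$ is not a cocktail-party graph, then $\mathrm{motion}(X)\geq \frac{1}{12}n$.
   Context: A distance-regular graph is a connected graph such that for vertices $v,w$ at distance $i$ the numbers of neighbours of $w$ at distance $i-1,i,i+1$ from $v$ are constants depending only on $i$. A cocktail-party graph is a regular complete bipartite graph with one perfect matching removed. The motion of a graph is the minimum, over non-identity automorphisms, of the number of vertices not fixed. *)

theory Defs
  imports Main "HOL-Library.Extended_Nat"
begin

definition simple_graph :: "'a set \<Rightarrow> ('a \<Rightarrow> 'a \<Rightarrow> bool) \<Rightarrow> bool" where
  "simple_graph V E \<longleftrightarrow> finite V \<and> V \<noteq> {} \<and>
     (\<forall>x y. E x y \<longrightarrow> x \<in> V \<and> y \<in> V) \<and>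
     (\<forall>x y. E x y \<longrightarrow> E y x) \<and> (\<forall>x. \<not> E x x)"

inductive walk :: "('a \<Rightarrow> 'a \<Rightarrow> bool) \<Rightarrow> 'a \<Rightarrow> 'a \<Rightarrow> nat \<Rightarrow> bool" for E where
  walk_nil: "walk E x x 0"
| walk_cons: "E x y \<Longrightarrow> walk E y z n \<Longrightarrow> walk E x z (Suc n)"

definition gdist :: "('a \<Rightarrow> 'a \<Rightarrow> bool) \<Rightarrow> 'a \<Rightarrow> 'a \<Rightarrow> nat" where
  "gdist E x y = (LEAST n. walk E x y n)"

definition connected_graph :: "'a set \<Rightarrow> ('a \<Rightarrow> 'a \<Rightarrow> bool) \<Rightarrow> bool" where
  "connected_graph V E \<longleftrightarrow> (\<forall>x\<in>V. \<forall>y\<in>V. \<exists>n. walk E x y n)"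

definition diameter :: "'a set \<Rightarrow> ('a \<Rightarrow> 'a \<Rightarrow> bool) \<Rightarrow> nat" where
  "diameter V E = Max {gdist E x y | x y. x \<in> V \<and> y \<in> V}"

definition distance_regular :: "'a set \<Rightarrow> ('a \<Rightarrow> 'a \<Rightarrow> bool) \<Rightarrow> bool" where
  "distance_regular V E \<longleftrightarrow> simple_graph V E \<and> connected_graph V E \<and>
     (\<forall>i. \<exists>c a b. \<forall>v\<in>V. \<forall>w\<in>V. gdist E v w = i \<longrightarrow>
        card {x\<in>V. E w x \<and> gdist E v x + 1 = i} = c \<and>
        card {x\<in>V. E w x \<and> gdist E v x = i} = a \<and>
        card {x\<in>V. E w x \<and> gdist E v x = i + 1} = b)"

definition bipartite :: "'a set \<Rightarrow> ('a \<Rightarrow> 'a \<Rightarrow> bool) \<Rightarrow> bool" where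
  "bipartite V E \<longleftrightarrow> (\<exists>A. A \<subseteq> V \<and> (\<forall>x y. E x y \<longrightarrow> (x \<in> A \<longleftrightarrow> y \<notin> A)))"

text \<open>Cocktail-party graph (as in the paper's context): the regular complete
  bipartite graph K_{m,m} with a perfect matching removed.\<close>
definition cocktail_party :: "'a set \<Rightarrow> ('a \<Rightarrow> 'a \<Rightarrow> bool) \<Rightarrow> bool" where
  "cocktail_party V E \<longleftrightarrow> (\<exists>A B f. A \<union> B = V \<and> A \<inter> B = {} \<and> bij_betw f A B \<and>
     (\<forall>x\<in>V. \<forall>y\<in>V. E x y \<longleftrightarrow>
        ((x \<in> A \<and> y \<in> B \<and> y \<noteq> f x) \<or> (y \<in> A \<and> x \<in> B \<and> x \<noteq> f y))))"

definition automorphism :: "'a set \<Rightarrow> ('a \<Rightarrow> 'a \<Rightarrow> bool) \<Rightarrow> ('a \<Rightarrow> 'a) \<Rightarrow> bool" where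
  "automorphism V E \<sigma> \<longleftrightarrow> bij_betw \<sigma> V V \<and> (\<forall>x\<in>V. \<forall>y\<in>V. E x y \<longleftrightarrow> E (\<sigma> x) (\<sigma> y))"

text \<open>Motion: minimum number of moved vertices over non-identity automorphisms
  (infinity if there is none).\<close>
definition motion :: "'a set \<Rightarrow> ('a \<Rightarrow> 'a \<Rightarrow> bool) \<Rightarrow> enat" where
  "motion V E = (INF \<sigma> \<in> {\<sigma>. automorphism V E \<sigma> \<and> (\<exists>x\<in>V. \<sigma> x \<noteq> x)}.
                    enat (card {x\<in>V. \<sigma> x \<noteq> x}))"

end

theory Submission
  imports Defs
begin

text \<open>Let \<open>s\<close> be a non-identity automorphism. If \<open>s\<close> fixes no vertex there is nothing to
  prove; otherwise \<open>s\<close> preserves both colour classes, so every moved vertex \<open>z\<close> satisfies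
  \<open>d(z, s z) = 2\<close>. Fix a moved vertex \<open>x\<close> and let \<open>F\<close> be the set of fixed vertices at
  distance 2 from \<open>x\<close>: then \<open>x\<close> and the rest of the second sphere move, at least
  \<open>1 + k\<^sub>2 - |F|\<close> vertices. Counting edges between \<open>F\<close> and the neighbours of \<open>x\<close>, and
  non-edges between \<open>F\<close> and the third sphere, each time splitting the other side into
  fixed and moved vertices, gives \<open>|F| \<le> 2k - c\<^sub>2\<close> and \<open>|F| \<le> 2k\<^sub>3 - p\<^sup>2\<^sub>3\<^sub>3\<close>. The second
  bound is useful because \<open>p\<^sup>2\<^sub>3\<^sub>3 = 0\<close> forces \<open>k\<^sub>3 = 1\<close>, i.e. a cocktail-party graph. With
  \<open>n = 2(k\<^sub>2 + 1)\<close> and \<open>k\<^sub>2 c\<^sub>2 = k(k - 1)\<close>, which gives \<open>k\<^sub>2 + 1 \<ge> 3(k - c\<^sub>2)\<close>, the two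
  bounds combine to \<open>n \<le> 12 (1 + k\<^sub>2 - |F|)\<close>.\<close>

lemma walk_snoc: "walk E x y n \<Longrightarrow> E y z \<Longrightarrow> walk E x z (Suc n)"
  by (induction rule: walk.induct) (auto intro: walk.intros)

lemma walk_sym:
  assumes "walk E x y n" and "\<And>x y. E x y \<Longrightarrow> E y x"
  shows "walk E y x n"
  using assms by (induction rule: walk.induct) (auto intro: walk.intros walk_snoc)

lemma walk_parity:
  assumes "walk E x y n" and "\<And>x y. E x y \<Longrightarrow> x \<in> A \<longleftrightarrow> y \<notin> A"
  shows "(x \<in> A \<longleftrightarrow> y \<in> A) \<longleftrightarrow> even n"
  using assms by (induction rule: walk.induct) auto

lemma walk_automorphism:
  assumes "walk E x y n" and "automorphism V E s" and "\<And>x y. E x y \<Longrightarrow> x \<in> V \<and> y \<in> V"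
  shows "walk E (s x) (s y) n"
  using assms
proof (induction rule: walk.induct)
  case (walk_cons x y z n)
  then have "E (s x) (s y)" unfolding automorphism_def by blast
  with walk_cons show ?case by (blast intro: walk.walk_cons)
qed (rule walk.walk_nil)

lemma sum_card_Collect_swap:
  assumes "finite X" and "finite Y"
  shows "(\<Sum>a\<in>X. card {b\<in>Y. R a b}) = (\<Sum>b\<in>Y. card {a\<in>X. R a b})"
proof -
  have "card {b\<in>Y. R a b} = (\<Sum>b\<in>Y. if R a b then 1 else 0)" for a
    using assms by (simp add: sum.If_cases Int_def conj_commute)
  moreover have "card {a\<in>X. R a b} = (\<Sum>a\<in>X. if R a b then 1 else 0)" for b
    using assms by (simp add: sum.If_cases Int_def conj_commute)
  ultimately show ?thesis by (simp add: sum.swap[of _ X])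
qed

lemma card_le_by_double_counting:
  fixes r n :: nat
  assumes "finite F" "finite X" "card X = n" "0 < r" "r \<le> n"
    and F_rel: "\<And>p. p \<in> F \<Longrightarrow> card {B\<in>X. R p B} = r"
    and in_P_rel: "\<And>B. B \<in> X \<inter> P \<Longrightarrow> card {p\<in>F. R p B} \<le> n"
    and notin_P_rel: "\<And>B. B \<in> X - P \<Longrightarrow> card {p\<in>F. R p B} \<le> r"
    and card_P: "card (X \<inter> P) \<le> r"
  shows "card F + r \<le> 2 * n"
proof -
  define a where "a = card (X \<inter> P)"
  have card_X_P: "card (X - P) = n - a"
    using card_Diff_subset_Int[of X P] assms(2,3) a_def by simp
  have sum_P: "(\<Sum>B\<in>X \<inter> P. card {p\<in>F. R p B}) \<le> a * n"
    using sum_bounded_above[of "X \<inter> P", OF in_P_rel] a_def by simp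
  have sum_not_P: "(\<Sum>B\<in>X - P. card {p\<in>F. R p B}) \<le> (n - a) * r"
    using sum_bounded_above[of "X - P", OF notin_P_rel] card_X_P by simp
  have "card F * r = (\<Sum>p\<in>F. card {B\<in>X. R p B})" using F_rel by simp
  also have "\<dots> = (\<Sum>B\<in>X. card {p\<in>F. R p B})" using assms(1,2) by (rule sum_card_Collect_swap)
  also have "\<dots> = (\<Sum>B\<in>X \<inter> P. card {p\<in>F. R p B}) + (\<Sum>B\<in>X - P. card {p\<in>F. R p B})"
    by (rule sum.Int_Diff[OF assms(2)])
  also have "\<dots> \<le> a * n + (n - a) * r" using sum_P sum_not_P by (rule add_mono)
  finally have "card F * r \<le> a * n + (n - a) * r" .
  moreover have "a \<le> n" using card_mono[OF assms(2), of "X \<inter> P"] assms(3) a_def by simp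
  ultimately have "int (card F) * r \<le> int a * n + (int n - int a) * r"
    by (simp flip: of_nat_diff of_nat_mult of_nat_add)
  moreover have "int a * (int n - int r) \<le> int r * (int n - int r)"
    using card_P a_def \<open>r \<le> n\<close> by (intro mult_right_mono) simp_all
  ultimately have "(int (card F) + int r) * int r \<le> (2 * int n) * int r"
    by (simp add: algebra_simps)
  then have "int ((card F + r) * r) \<le> int ((2 * n) * r)" by simp
  then have "(card F + r) * r \<le> (2 * n) * r" by (simp only: of_nat_le_iff)
  then show ?thesis using \<open>0 < r\<close> by simp
qed

lemma enat_le_mult_INF:
  assumes "0 < q" and "\<And>\<sigma>. \<sigma> \<in> S \<Longrightarrow> n \<le> q * f \<sigma>"
  shows "enat n \<le> enat q * (INF \<sigma>\<in>S. enat (f \<sigma>))"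
proof (cases "S = {}")
  case True
  then show ?thesis using \<open>0 < q\<close> by (simp add: top_enat_def)
next
  case False
  then have "(INF \<sigma>\<in>S. enat (f \<sigma>)) \<in> (\<lambda>\<sigma>. enat (f \<sigma>)) ` S"
    unfolding Inf_enat_def by (auto intro: LeastI)
  then obtain \<sigma> where "\<sigma> \<in> S" "(INF \<sigma>\<in>S. enat (f \<sigma>)) = enat (f \<sigma>)" by blast
  then show ?thesis using assms(2) by simp
qed

locale bipartite_diameter3_graph =
  fixes V :: "'a set" and E :: "'a \<Rightarrow> 'a \<Rightarrow> bool" and A :: "'a set"
  assumes simple: "simple_graph V E"
    and connected: "connected_graph V E"
    and colour_class: "A \<subseteq> V"
    and bipartition: "\<And>x y. E x y \<Longrightarrow> x \<in> A \<longleftrightarrow> y \<notin> A"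
    and diameter_3: "diameter V E = 3"
begin

abbreviation d :: "'a \<Rightarrow> 'a \<Rightarrow> nat" where "d \<equiv> gdist E"

definition nbhd :: "'a \<Rightarrow> 'a set" where "nbhd u = {z\<in>V. E u z}"

definition sphere :: "nat \<Rightarrow> 'a \<Rightarrow> 'a set" where "sphere i u = {z\<in>V. d u z = i}"

lemma finite_V: "finite V" and V_nonempty: "V \<noteq> {}"
  and edge_in_V: "E x y \<Longrightarrow> x \<in> V \<and> y \<in> V"
  and edge_sym: "E x y \<Longrightarrow> E y x" and edge_irrefl: "\<not> E x x"
  using simple unfolding simple_graph_def by auto

lemma finite_nbhd: "finite (nbhd u)" and finite_sphere: "finite (sphere i u)"
  using finite_V unfolding nbhd_def sphere_def by simp_all

lemma walk_dist: "x \<in> V \<Longrightarrow> y \<in> V \<Longrightarrow> walk E x y (d x y)"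
  using connected unfolding gdist_def connected_graph_def by (meson LeastI_ex)

lemma dist_le_walk: "walk E x y n \<Longrightarrow> d x y \<le> n"
  unfolding gdist_def by (rule Least_le)

lemma dist_sym:
  assumes "x \<in> V" "y \<in> V"
  shows "d x y = d y x"
proof -
  have "d y x \<le> d x y" using walk_sym[OF walk_dist[OF assms] edge_sym] by (rule dist_le_walk)
  moreover have "d x y \<le> d y x" using walk_sym[OF walk_dist[OF assms(2,1)] edge_sym] by (rule dist_le_walk)
  ultimately show ?thesis by simp
qed

lemma dist_eq_0_iff:
  assumes "x \<in> V" "y \<in> V"
  shows "d x y = 0 \<longleftrightarrow> x = y"
proof
  assume "d x y = 0"
  then show "x = y" using walk_dist[OF assms] by (auto elim: walk.cases)
qed (use dist_le_walk[OF walk_nil] in simp)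

lemma dist_eq_1_iff:
  assumes "x \<in> V" "y \<in> V"
  shows "d x y = 1 \<longleftrightarrow> E x y"
proof
  assume "d x y = 1"
  then have "walk E x y (Suc 0)" using walk_dist[OF assms] by simp
  then show "E x y" by (auto elim!: walk.cases)
next
  assume "E x y"
  then have "d x y \<le> Suc 0" by (blast intro: dist_le_walk walk.intros)
  moreover have "x \<noteq> y" using \<open>E x y\<close> edge_irrefl by blast
  ultimately show "d x y = 1" using dist_eq_0_iff[OF assms] by linarith
qed

lemma dist_edge_le: "E y z \<Longrightarrow> x \<in> V \<Longrightarrow> d x z \<le> d x y + 1"
  using edge_in_V walk_dist dist_le_walk walk_snoc by fastforce

lemma finite_dists: "finite {d x y |x y. x \<in> V \<and> y \<in> V}"
proof -
  have "{d x y |x y. x \<in> V \<and> y \<in> V} = (\<lambda>(x, y). d x y) ` (V \<times> V)" by auto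
  then show ?thesis using finite_V by simp
qed

lemma dist_le_3: "x \<in> V \<Longrightarrow> y \<in> V \<Longrightarrow> d x y \<le> 3"
  using finite_dists diameter_3 unfolding diameter_def by (metis (mono_tags, lifting) Max_ge mem_Collect_eq)

lemma even_dist_iff: "x \<in> V \<Longrightarrow> y \<in> V \<Longrightarrow> even (d x y) \<longleftrightarrow> (x \<in> A \<longleftrightarrow> y \<in> A)"
  using walk_parity[OF walk_dist bipartition] by blast

lemma dist_eq_2I:
  assumes "x \<in> V" "y \<in> V" "even (d x y)" "x \<noteq> y"
  shows "d x y = 2"
proof -
  have "d x y \<le> 3" "d x y \<noteq> 0" using dist_le_3 dist_eq_0_iff assms by auto
  moreover have "\<forall>n::nat. n \<le> 3 \<longrightarrow> n \<noteq> 0 \<longrightarrow> even n \<longrightarrow> n = 2" by presburger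
  ultimately show ?thesis using \<open>even (d x y)\<close> by blast
qed

lemma dist_eq_3I:
  assumes "x \<in> V" "y \<in> V" "odd (d x y)" "\<not> E x y"
  shows "d x y = 3"
proof -
  have "d x y \<le> 3" "d x y \<noteq> 1" using dist_le_3 dist_eq_1_iff assms by auto
  moreover have "\<forall>n::nat. n \<le> 3 \<longrightarrow> n \<noteq> 1 \<longrightarrow> odd n \<longrightarrow> n = 3" by presburger
  ultimately show ?thesis using \<open>odd (d x y)\<close> by blast
qed

lemma adjacent_iff:
  assumes "x \<in> V" "y \<in> V"
  shows "E x y \<longleftrightarrow> (x \<in> A \<longleftrightarrow> y \<notin> A) \<and> d x y \<noteq> 3"
  using dist_eq_3I[OF assms] dist_eq_1_iff[OF assms] even_dist_iff[OF assms] bipartition by fastforce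

lemma ex_dist_3: "\<exists>u\<in>V. \<exists>w\<in>V. d u w = 3"
proof -
  have "{d x y |x y. x \<in> V \<and> y \<in> V} \<noteq> {}" using V_nonempty by blast
  from Max_in[OF finite_dists this] show ?thesis using diameter_3 unfolding diameter_def by auto
qed

lemma ex_dist_2: "\<exists>u\<in>V. \<exists>w\<in>V. d u w = 2"
proof -
  obtain u w where uw: "u \<in> V" "w \<in> V" "d u w = 3" using ex_dist_3 by blast
  then have "walk E w u (Suc 2)" using walk_dist[OF uw(2,1)] dist_sym[OF uw(1,2)] by (simp add: numeral_3_eq_3)
  then obtain b where b: "E w b" "walk E b u 2" by (auto elim: walk.cases)
  have bV: "b \<in> V" using edge_in_V b by blast
  have "d b u \<le> 2" using dist_le_walk b by blast
  moreover have "d u w \<le> d u b + 1" using dist_edge_le[OF edge_sym[OF b(1)] uw(1)] .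
  ultimately have "d u b = 2" using uw dist_sym bV by auto
  then show ?thesis using uw bV by blast
qed

lemma dist_sphere_2_sphere_3:
  assumes "x \<in> V" "p \<in> sphere 2 x" "B \<in> sphere 3 x" "\<not> E B p"
  shows "d B p = 3"
proof -
  have "p \<in> V" "B \<in> V" "d x p = 2" "d x B = 3" using assms(2,3) unfolding sphere_def by auto
  then have "odd (d B p)"
    using even_dist_iff[OF assms(1) \<open>p \<in> V\<close>] even_dist_iff[OF assms(1) \<open>B \<in> V\<close>]
      even_dist_iff[OF \<open>B \<in> V\<close> \<open>p \<in> V\<close>] by simp
  then show ?thesis using dist_eq_3I \<open>p \<in> V\<close> \<open>B \<in> V\<close> assms(4) by blast
qed

end

locale bipartite_drg3 = bipartite_diameter3_graph +
  fixes k c :: nat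
  assumes card_nbhd: "u \<in> V \<Longrightarrow> card (nbhd u) = k"
    and card_common_nbhd: "u \<in> V \<Longrightarrow> w \<in> V \<Longrightarrow> d u w = 2 \<Longrightarrow> card (nbhd u \<inter> nbhd w) = c"
begin

lemma mem_nbhd: "z \<in> nbhd u \<longleftrightarrow> E u z"
  unfolding nbhd_def using edge_in_V by auto

lemma mem_sphere: "z \<in> sphere i u \<longleftrightarrow> z \<in> V \<and> d u z = i"
  unfolding sphere_def by simp

lemma c_pos: "1 \<le> c"
proof -
  obtain u w where uw: "u \<in> V" "w \<in> V" "d u w = 2" using ex_dist_2 by blast
  then have "walk E u w (Suc (Suc 0))" using walk_dist[OF uw(1,2)] by (simp add: numeral_2_eq_2)
  then obtain z where "E u z" "E z w" by (auto elim!: walk.cases)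
  then have "nbhd u \<inter> nbhd w \<noteq> {}" using mem_nbhd edge_sym by blast
  then show ?thesis using card_common_nbhd[OF uw] finite_nbhd
    by (metis One_nat_def Suc_leI card_gt_0_iff finite_Int)
qed

lemma c_le_k: "c \<le> k"
proof -
  obtain u w where uw: "u \<in> V" "w \<in> V" "d u w = 2" using ex_dist_2 by blast
  have "card (nbhd u \<inter> nbhd w) \<le> card (nbhd u)" by (simp add: card_mono finite_nbhd)
  then show ?thesis using card_common_nbhd[OF uw] card_nbhd uw by simp
qed

lemma nbhd_of_neighbour:
  assumes "u \<in> V" "E u a"
  shows "nbhd a = insert u {b\<in>sphere 2 u. E a b}"
proof -
  have "b \<in> sphere 2 u" if "E a b" "b \<noteq> u" for b
  proof -
    have "d u a = 1" using dist_eq_1_iff[OF assms(1)] assms edge_in_V by blast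
    then have "even (d u b)" using even_dist_iff bipartition assms that edge_in_V by (metis odd_one)
    then show ?thesis using dist_eq_2I assms that edge_in_V mem_sphere by blast
  qed
  then show ?thesis using assms edge_sym mem_nbhd mem_sphere by auto
qed

lemma card_sphere_2_mult: "u \<in> V \<Longrightarrow> card (sphere 2 u) * c = k * (k - 1)"
proof -
  assume u: "u \<in> V"
  have "(\<Sum>a\<in>nbhd u. card {b\<in>sphere 2 u. E a b}) = (\<Sum>b\<in>sphere 2 u. card {a\<in>nbhd u. E a b})"
    by (rule sum_card_Collect_swap[OF finite_nbhd finite_sphere])
  moreover have "card {b\<in>sphere 2 u. E a b} = k - 1" if "a \<in> nbhd u" for a
  proof -
    have "u \<notin> {b\<in>sphere 2 u. E a b}" using mem_sphere dist_eq_0_iff[OF u u] by simp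
    moreover have "a \<in> V" "E u a" using that mem_nbhd edge_in_V by auto
    ultimately have "card (nbhd a) = Suc (card {b\<in>sphere 2 u. E a b})"
      using nbhd_of_neighbour[OF u] finite_sphere by (simp add: card_insert_disjoint)
    then show ?thesis using card_nbhd \<open>a \<in> V\<close> by simp
  qed
  moreover have "card {a\<in>nbhd u. E a b} = c" if "b \<in> sphere 2 u" for b
  proof -
    have "{a\<in>nbhd u. E a b} = nbhd u \<inter> nbhd b" using edge_sym mem_nbhd by blast
    then show ?thesis using card_common_nbhd u that mem_sphere by auto
  qed
  ultimately show ?thesis using card_nbhd[OF u] by simp
qed

lemma nbhd_of_sphere_2:
  assumes "u \<in> V" "a \<in> sphere 2 u"
  shows "nbhd a - nbhd u = {b\<in>sphere 3 u. E a b}"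
proof -
  have "d u b = 3" if "E a b" "\<not> E u b" for b
    using dist_eq_3I even_dist_iff bipartition assms that edge_in_V mem_sphere by (metis even_numeral)
  moreover have "\<not> E u b" if "d u b = 3" "b \<in> V" for b
    using dist_eq_1_iff[OF assms(1)] that by force
  ultimately show ?thesis using mem_nbhd mem_sphere edge_in_V by auto
qed

lemma card_up_from_sphere_2:
  assumes "u \<in> V" "a \<in> sphere 2 u"
  shows "card {b\<in>sphere 3 u. E a b} = k - c"
proof -
  have "card (nbhd a - nbhd u) = card (nbhd a) - card (nbhd a \<inter> nbhd u)"
    by (simp add: card_Diff_subset_Int finite_nbhd)
  moreover have "card (nbhd a \<inter> nbhd u) = c"
    using card_common_nbhd assms mem_sphere dist_sym by (metis Int_commute)
  ultimately show ?thesis using nbhd_of_sphere_2[OF assms] card_nbhd assms mem_sphere by simp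
qed

lemma nbhd_of_sphere_3:
  assumes "u \<in> V" "b \<in> sphere 3 u"
  shows "{a\<in>sphere 2 u. E a b} = nbhd b"
proof -
  have "d u a = 2" if "E b a" for a
  proof -
    have "a \<in> V" using that edge_in_V by blast
    moreover have "even (d u a)"
      using even_dist_iff bipartition assms that edge_in_V mem_sphere by (metis odd_numeral)
    moreover have "a \<noteq> u" using that dist_eq_1_iff[OF assms(1), of b] assms(2) mem_sphere edge_sym by force
    ultimately show ?thesis using dist_eq_2I assms(1) by blast
  qed
  then show ?thesis using edge_sym edge_in_V mem_nbhd mem_sphere by auto
qed

lemma card_sphere_3_mult: "u \<in> V \<Longrightarrow> card (sphere 2 u) * (k - c) = card (sphere 3 u) * k"
proof -
  assume u: "u \<in> V"
  have "(\<Sum>a\<in>sphere 2 u. card {b\<in>sphere 3 u. E a b}) = (\<Sum>b\<in>sphere 3 u. card {a\<in>sphere 2 u. E a b})"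
    by (rule sum_card_Collect_swap[OF finite_sphere finite_sphere])
  then show ?thesis using card_up_from_sphere_2[OF u] nbhd_of_sphere_3[OF u] card_nbhd mem_sphere
    by simp
qed

lemma V_eq_spheres:
  assumes u: "u \<in> V"
  shows "V = insert u (nbhd u \<union> sphere 2 u \<union> sphere 3 u)"
proof -
  have "z \<in> insert u (nbhd u \<union> sphere 2 u \<union> sphere 3 u)" if z: "z \<in> V" for z
  proof -
    have "d u z = 0 \<or> d u z = 1 \<or> d u z = 2 \<or> d u z = 3" using dist_le_3[OF u z] by arith
    then show ?thesis using dist_eq_0_iff[OF u z] dist_eq_1_iff[OF u z] mem_nbhd mem_sphere z by blast
  qed
  then show ?thesis using u unfolding nbhd_def sphere_def by blast
qed

lemma card_V_spheres:
  assumes u: "u \<in> V"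
  shows "card V = 1 + k + card (sphere 2 u) + card (sphere 3 u)"
proof -
  have "u \<notin> nbhd u \<union> sphere 2 u \<union> sphere 3 u"
    using edge_irrefl mem_nbhd mem_sphere dist_eq_0_iff[OF u u] by auto
  moreover have "d u z = 1" if "z \<in> nbhd u" for z
    using that dist_eq_1_iff[OF u] mem_nbhd edge_in_V by blast
  then have "nbhd u \<inter> sphere 2 u = {}" "(nbhd u \<union> sphere 2 u) \<inter> sphere 3 u = {}"
    using mem_sphere by fastforce+
  ultimately have "card (insert u (nbhd u \<union> sphere 2 u \<union> sphere 3 u))
      = 1 + k + card (sphere 2 u) + card (sphere 3 u)"
    using card_nbhd[OF u] by (simp add: card_Un_disjoint finite_nbhd finite_sphere)
  then show ?thesis using V_eq_spheres[OF u] by simp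
qed

lemma not_adjacent_in_sphere_3:
  assumes "u \<in> V" "w \<in> V" "d u w = 2"
  shows "{b\<in>sphere 3 u. \<not> E w b} = {z\<in>V. d u z = 3 \<and> d w z = 3}"
proof (intro equalityI subsetI)
  fix z assume "z \<in> {b\<in>sphere 3 u. \<not> E w b}"
  then have z: "z \<in> V" "d u z = 3" "\<not> E w z" using mem_sphere by auto
  have "odd (d w z)"
    using even_dist_iff[OF assms(1) z(1)] even_dist_iff[OF assms(2) z(1)]
      even_dist_iff[OF assms(1,2)] assms(3) z(2) by simp
  then show "z \<in> {z\<in>V. d u z = 3 \<and> d w z = 3}" using dist_eq_3I[OF assms(2) z(1)] z by simp
next
  fix z assume "z \<in> {z\<in>V. d u z = 3 \<and> d w z = 3}"
  then have "z \<in> V" "d u z = 3" "d w z = 3" by auto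
  then show "z \<in> {b\<in>sphere 3 u. \<not> E w b}" using dist_eq_1_iff[OF assms(2) \<open>z \<in> V\<close>] mem_sphere by auto
qed

lemma card_common_sphere_3_add:
  assumes "u \<in> V" "w \<in> V" "d u w = 2"
  shows "card {z\<in>V. d u z = 3 \<and> d w z = 3} + (k - c) = card (sphere 3 u)"
proof -
  have "card ({b\<in>sphere 3 u. E w b} \<union> {b\<in>sphere 3 u. \<not> E w b})
      = card {b\<in>sphere 3 u. E w b} + card {b\<in>sphere 3 u. \<not> E w b}"
    by (rule card_Un_disjoint) (auto simp: finite_sphere)
  moreover have "{b\<in>sphere 3 u. E w b} \<union> {b\<in>sphere 3 u. \<not> E w b} = sphere 3 u" by blast
  moreover have "card {b\<in>sphere 3 u. E w b} = k - c"
    using card_up_from_sphere_2 assms mem_sphere by blast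
  ultimately show ?thesis using not_adjacent_in_sphere_3[OF assms] by simp
qed

text \<open>The intersection numbers \<open>k\<^sub>2\<close>, \<open>k\<^sub>3\<close> and \<open>p\<^sup>2\<^sub>3\<^sub>3\<close>, written through \<open>k\<close> and \<open>c\<close>
  so that they visibly do not depend on a base vertex.\<close>
definition k2 :: nat where "k2 = k * (k - 1) div c"
definition k3 :: nat where "k3 = k2 * (k - c) div k"
definition p33 :: nat where "p33 = k3 + c - k"

lemma k_pos: "1 \<le> k"
  using c_pos c_le_k by simp

lemma card_sphere_2: "u \<in> V \<Longrightarrow> card (sphere 2 u) = k2"
  unfolding k2_def using card_sphere_2_mult[symmetric] c_pos by simp

lemma card_sphere_3:
  assumes "u \<in> V"
  shows "card (sphere 3 u) = k3"
proof -
  have "k3 = card (sphere 3 u) * k div k"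
    unfolding k3_def using card_sphere_3_mult[OF assms] card_sphere_2[OF assms] by simp
  then show ?thesis using k_pos by simp
qed

lemma card_V: "card V = 1 + k + k2 + k3"
proof -
  obtain u where "u \<in> V" using V_nonempty by blast
  then show ?thesis using card_V_spheres card_sphere_2 card_sphere_3 by simp
qed

lemma k2_mult_c: "int k2 * int c = int k * (int k - 1)"
proof -
  obtain u where "u \<in> V" using V_nonempty by blast
  then have "k2 * c = k * (k - 1)" using card_sphere_2_mult card_sphere_2 by simp
  then show ?thesis using k_pos by (metis of_nat_1 of_nat_diff of_nat_mult)
qed

lemma k3_add_k: "k3 + k = k2 + 1"
proof -
  obtain u where u: "u \<in> V" using V_nonempty by blast
  have "k2 * (k - c) = k3 * k" using card_sphere_3_mult[OF u] card_sphere_2[OF u] card_sphere_3[OF u] by simp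
  then have "int k2 * (int k - int c) = int k3 * int k" using c_le_k by (metis of_nat_diff of_nat_mult)
  then have "int k3 * int k = (int k2 + 1 - int k) * int k" using k2_mult_c by (simp add: algebra_simps)
  then show ?thesis using k_pos by simp
qed

lemma card_common_sphere_3:
  assumes "u \<in> V" "w \<in> V" "d u w = 2"
  shows "card {z\<in>V. d u z = 3 \<and> d w z = 3} = p33"
  using card_common_sphere_3_add[OF assms] card_sphere_3[OF assms(1)] c_le_k unfolding p33_def by linarith

lemma p33_add_k: "p33 + k = k3 + c" and p33_le_k3: "p33 \<le> k3"
proof -
  obtain u w where uw: "u \<in> V" "w \<in> V" "d u w = 2" using ex_dist_2 by blast
  show "p33 + k = k3 + c" "p33 \<le> k3"
    using card_common_sphere_3_add[OF uw] card_common_sphere_3[OF uw] card_sphere_3[OF uw(1)] c_le_k by linarith+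
qed

lemma k3_pos: "1 \<le> k3"
proof -
  obtain u w where "u \<in> V" "w \<in> V" "d u w = 3" using ex_dist_3 by blast
  then have "sphere 3 u \<noteq> {}" using mem_sphere by blast
  then show ?thesis using card_sphere_3 \<open>u \<in> V\<close> finite_sphere
    by (metis One_nat_def Suc_leI card_gt_0_iff)
qed

lemma k3_eq_1_if_p33_eq_0:
  assumes "p33 = 0"
  shows "k3 = 1"
proof -
  have "int c = int k - int k3" "int k2 = int k + int k3 - 1"
    using p33_add_k k3_add_k assms by linarith+
  then have "(int k + int k3 - 1) * (int k - int k3) = int k * (int k - 1)"
    using k2_mult_c by simp
  then have "int k3 * int k3 = int k3 * 1" by (simp add: algebra_simps)
  then show ?thesis using k3_pos by simp
qed

lemma cocktail_party_if_p33_eq_0: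
  assumes "p33 = 0"
  shows "cocktail_party V E"
proof -
  define f where "f u = (THE z. z \<in> sphere 3 u)" for u
  have sphere_3_eq: "sphere 3 u = {f u}" if u: "u \<in> V" for u
  proof -
    obtain z where "sphere 3 u = {z}"
      using card_sphere_3[OF u] k3_eq_1_if_p33_eq_0[OF assms] card_1_singletonE by metis
    then show ?thesis unfolding f_def by simp
  qed
  then have f_in_V: "f u \<in> V" and dist_3_iff: "z \<in> V \<Longrightarrow> d u z = 3 \<longleftrightarrow> z = f u" if "u \<in> V" for u z
    using that mem_sphere by blast+
  have f_f: "f (f u) = u" if u: "u \<in> V" for u
  proof -
    have "d (f u) u = 3" using dist_sym[OF u f_in_V[OF u]] dist_3_iff[OF u f_in_V[OF u]] by simp
    then show ?thesis using dist_3_iff[OF f_in_V[OF u] u] by simp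
  qed
  have f_side: "u \<in> A \<longleftrightarrow> f u \<notin> A" if "u \<in> V" for u
    using even_dist_iff[OF that f_in_V[OF that]] dist_3_iff[OF that f_in_V[OF that]] by simp
  show ?thesis unfolding cocktail_party_def
  proof (intro exI conjI)
    show "A \<union> (V - A) = V" "A \<inter> (V - A) = {}" using colour_class by blast+
    show "bij_betw f A (V - A)"
      by (rule bij_betw_byWitness[where f' = f]) (use f_f f_in_V f_side colour_class in blast)+
    show "\<forall>x\<in>V. \<forall>y\<in>V. E x y \<longleftrightarrow> (x \<in> A \<and> y \<in> V - A \<and> y \<noteq> f x \<or> y \<in> A \<and> x \<in> V - A \<and> x \<noteq> f y)"
    proof (intro ballI)
      fix x y assume x: "x \<in> V" and y: "y \<in> V"
      have "y = f x \<longleftrightarrow> x = f y" using f_f[OF x] f_f[OF y] by auto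
      then show "E x y \<longleftrightarrow> (x \<in> A \<and> y \<in> V - A \<and> y \<noteq> f x \<or> y \<in> A \<and> x \<in> V - A \<and> x \<noteq> f y)"
        using adjacent_iff[OF x y] dist_3_iff[OF x y] x y by blast
    qed
  qed
qed

lemma card_sphere_3_not_adjacent:
  assumes "u \<in> V" "v \<in> V" "d u v = 2"
  shows "card {b\<in>sphere 3 u. \<not> E v b} = p33"
  using not_adjacent_in_sphere_3[OF assms] card_common_sphere_3[OF assms] by simp

lemma three_mult_k_le: "3 * k \<le> k2 + 1 + 3 * c"
proof -
  let ?X = "int k2 + 1 + 3 * int c - 3 * int k"
  have "4 * (int c * ?X) = 4 * (int k2 * int c) + 4 * int c + 12 * int c * int c - 12 * int k * int c"
    by (simp add: algebra_simps)
  also have "\<dots> = 4 * (int k * (int k - 1)) + 4 * int c + 12 * int c * int c - 12 * int k * int c"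
    using k2_mult_c by simp
  also have "\<dots> = 3 * (2 * int c - int k)\<^sup>2 + (int k - 2)\<^sup>2 + 4 * (int c - 1)"
    by (simp add: algebra_simps power2_eq_square)
  finally have "4 * (int c * ?X) = 3 * (2 * int c - int k)\<^sup>2 + (int k - 2)\<^sup>2 + 4 * (int c - 1)" .
  moreover have "0 \<le> 3 * (2 * int c - int k)\<^sup>2 + (int k - 2)\<^sup>2 + 4 * (int c - 1)" using c_pos by simp
  ultimately have "0 \<le> int c * ?X" by linarith
  then have "int (3 * k) \<le> int (k2 + 1 + 3 * c)" using c_pos by (simp add: zero_le_mult_iff)
  then show ?thesis by (simp only: of_nat_le_iff)
qed

end

locale bipartite_drg3_automorphism = bipartite_drg3 +
  fixes s :: "'a \<Rightarrow> 'a" and w :: 'a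
  assumes automorphism: "automorphism V E s"
    and fixed_point: "w \<in> V" "s w = w"
begin

lemma aut_in_V: "z \<in> V \<Longrightarrow> s z \<in> V"
  using automorphism unfolding automorphism_def by (meson bij_betwE)

lemma aut_edge_iff: "a \<in> V \<Longrightarrow> b \<in> V \<Longrightarrow> E (s a) (s b) \<longleftrightarrow> E a b"
  using automorphism unfolding automorphism_def by blast

lemma aut_colour_class_iff:
  assumes "z \<in> V"
  shows "s z \<in> A \<longleftrightarrow> z \<in> A"
proof -
  have "walk E w (s z) (d w z)"
    using walk_automorphism[OF walk_dist[OF fixed_point(1) assms] automorphism edge_in_V] fixed_point
    by simp
  from walk_parity[OF this bipartition] walk_parity[OF walk_dist[OF fixed_point(1) assms] bipartition]
  show ?thesis by blast
qed

lemma dist_moved: "z \<in> V \<Longrightarrow> s z \<noteq> z \<Longrightarrow> d z (s z) = 2"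
  using dist_eq_2I aut_in_V even_dist_iff aut_colour_class_iff by (metis (full_types))

definition fixed_at_2 :: "'a \<Rightarrow> 'a set" where "fixed_at_2 x = {p\<in>sphere 2 x. s p = p}"

lemma card_moved_ge:
  assumes "x \<in> V" "s x \<noteq> x"
  shows "1 + k2 \<le> card {z\<in>V. s z \<noteq> z} + card (fixed_at_2 x)"
proof -
  have "insert x (sphere 2 x - fixed_at_2 x) \<subseteq> {z\<in>V. s z \<noteq> z}"
    using assms unfolding fixed_at_2_def sphere_def by auto
  then have "card (insert x (sphere 2 x - fixed_at_2 x)) \<le> card {z\<in>V. s z \<noteq> z}"
    by (simp add: card_mono finite_V)
  moreover have "x \<notin> sphere 2 x - fixed_at_2 x" using mem_sphere dist_eq_0_iff[OF assms(1) assms(1)] by simp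
  then have "card (insert x (sphere 2 x - fixed_at_2 x)) = Suc (card (sphere 2 x - fixed_at_2 x))"
    using finite_sphere by simp
  moreover have sub: "fixed_at_2 x \<subseteq> sphere 2 x" unfolding fixed_at_2_def by blast
  then have "card (sphere 2 x - fixed_at_2 x) = k2 - card (fixed_at_2 x)"
    using card_Diff_subset[OF finite_subset[OF sub finite_sphere] sub] card_sphere_2[OF assms(1)] by simp
  moreover have "card (fixed_at_2 x) \<le> k2"
    using card_mono[OF finite_sphere sub] card_sphere_2[OF assms(1)] by simp
  ultimately show ?thesis by linarith
qed

text \<open>Count edges between the fixed vertices of \<open>sphere 2 x\<close> and \<open>nbhd x\<close>: a moved
  neighbour \<open>B\<close> of \<open>x\<close> sees them only inside \<open>nbhd B \<inter> nbhd (s B)\<close>, and a fixed one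
  lies in \<open>nbhd x \<inter> nbhd (s x)\<close>.\<close>
lemma card_fixed_at_2_le_nbhd:
  assumes x: "x \<in> V" "s x \<noteq> x"
  shows "card (fixed_at_2 x) + c \<le> 2 * k"
proof (rule card_le_by_double_counting[where X = "nbhd x" and P = "{B. s B = B}" and R = E])
  show "finite (fixed_at_2 x)" unfolding fixed_at_2_def using finite_sphere by simp
  show "card {B\<in>nbhd x. E p B} = c" if "p \<in> fixed_at_2 x" for p
  proof -
    have "{B\<in>nbhd x. E p B} = nbhd x \<inter> nbhd p" using mem_nbhd edge_sym by blast
    then show ?thesis using card_common_nbhd x that mem_sphere unfolding fixed_at_2_def by auto
  qed
  show "card {p\<in>fixed_at_2 x. E p B} \<le> k" if "B \<in> nbhd x \<inter> {B. s B = B}" for B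
  proof -
    have "{p\<in>fixed_at_2 x. E p B} \<subseteq> nbhd B" using mem_nbhd edge_sym by blast
    moreover have "B \<in> V" using that nbhd_def by simp
    ultimately show ?thesis using card_mono[OF finite_nbhd] card_nbhd by metis
  qed
  show "card {p\<in>fixed_at_2 x. E p B} \<le> c" if "B \<in> nbhd x - {B. s B = B}" for B
  proof -
    have B: "B \<in> V" "s B \<noteq> B" using that nbhd_def by auto
    have "{p\<in>fixed_at_2 x. E p B} \<subseteq> nbhd B \<inter> nbhd (s B)"
      using aut_edge_iff[of _ B] B(1) mem_nbhd edge_sym edge_in_V unfolding fixed_at_2_def by fastforce
    then show ?thesis
      using card_mono[of "nbhd B \<inter> nbhd (s B)"] finite_nbhd card_common_nbhd[OF B(1) aut_in_V[OF B(1)]]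
        dist_moved[OF B] by fastforce
  qed
  have "nbhd x \<inter> {B. s B = B} \<subseteq> nbhd x \<inter> nbhd (s x)"
    using aut_edge_iff x(1) mem_nbhd edge_in_V by fastforce
  then show "card (nbhd x \<inter> {B. s B = B}) \<le> c"
    using card_mono[of "nbhd x \<inter> nbhd (s x)"] finite_nbhd card_common_nbhd[OF x(1) aut_in_V[OF x(1)]]
      dist_moved[OF x] by fastforce
qed (use finite_nbhd card_nbhd x c_pos c_le_k in auto)

text \<open>The same count for non-edges between the fixed vertices of \<open>sphere 2 x\<close> and
  \<open>sphere 3 x\<close>; now a fixed \<open>B\<close> sees them inside \<open>sphere 3 B\<close>.\<close>
lemma card_fixed_at_2_le_sphere_3:
  assumes x: "x \<in> V" "s x \<noteq> x" and "0 < p33"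
  shows "card (fixed_at_2 x) + p33 \<le> 2 * k3"
proof (rule card_le_by_double_counting[where X = "sphere 3 x" and P = "{B. s B = B}"
      and R = "\<lambda>p B. \<not> E p B"])
  show "finite (fixed_at_2 x)" unfolding fixed_at_2_def using finite_sphere by simp
  show "card {B\<in>sphere 3 x. \<not> E p B} = p33" if "p \<in> fixed_at_2 x" for p
    using card_sphere_3_not_adjacent x that mem_sphere unfolding fixed_at_2_def by auto
  show "card {p\<in>fixed_at_2 x. \<not> E p B} \<le> k3" if "B \<in> sphere 3 x \<inter> {B. s B = B}" for B
  proof -
    have "{p\<in>fixed_at_2 x. \<not> E p B} \<subseteq> sphere 3 B"
      using dist_sphere_2_sphere_3[OF x(1)] that edge_sym mem_sphere unfolding fixed_at_2_def by blast
    moreover have "B \<in> V" using that mem_sphere by simp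
    ultimately show ?thesis using card_mono[OF finite_sphere] card_sphere_3 by metis
  qed
  show "card {p\<in>fixed_at_2 x. \<not> E p B} \<le> p33" if "B \<in> sphere 3 x - {B. s B = B}" for B
  proof -
    have B: "B \<in> V" "s B \<noteq> B" using that mem_sphere by auto
    have "{p\<in>fixed_at_2 x. \<not> E p B} \<subseteq> {b\<in>sphere 3 B. \<not> E (s B) b}"
    proof
      fix p assume "p \<in> {p\<in>fixed_at_2 x. \<not> E p B}"
      then have p: "p \<in> sphere 2 x" "s p = p" "\<not> E p B" unfolding fixed_at_2_def by auto
      then have "p \<in> sphere 3 B" using dist_sphere_2_sphere_3[OF x(1) p(1)] that edge_sym mem_sphere by blast
      moreover have "\<not> E (s B) p" using aut_edge_iff[OF B(1), of p] p edge_sym mem_sphere by auto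
      ultimately show "p \<in> {b\<in>sphere 3 B. \<not> E (s B) b}" by blast
    qed
    then have "card {p\<in>fixed_at_2 x. \<not> E p B} \<le> card {b\<in>sphere 3 B. \<not> E (s B) b}"
      by (rule card_mono[rotated]) (simp add: finite_sphere)
    then show ?thesis using card_sphere_3_not_adjacent[OF B(1) aut_in_V[OF B(1)] dist_moved[OF B]] by simp
  qed
  have "sphere 3 x \<inter> {B. s B = B} \<subseteq> {b\<in>sphere 3 x. \<not> E (s x) b}"
    using aut_edge_iff[OF x(1)] dist_eq_1_iff[OF x(1)] mem_sphere by fastforce
  then have "card (sphere 3 x \<inter> {B. s B = B}) \<le> card {b\<in>sphere 3 x. \<not> E (s x) b}"
    by (rule card_mono[rotated]) (simp add: finite_sphere)
  then show "card (sphere 3 x \<inter> {B. s B = B}) \<le> p33"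
    using card_sphere_3_not_adjacent[OF x(1) aut_in_V[OF x(1)] dist_moved[OF x]] by simp
qed (use finite_sphere card_sphere_3 x p33_le_k3 \<open>0 < p33\<close> in auto)

lemma card_V_le_12_moved:
  assumes "x \<in> V" "s x \<noteq> x" and "0 < p33"
  shows "card V \<le> 12 * card {z\<in>V. s z \<noteq> z}"
  using card_moved_ge[OF assms(1,2)] card_fixed_at_2_le_nbhd[OF assms(1,2)]
    card_fixed_at_2_le_sphere_3[OF assms] three_mult_k_le card_V k3_add_k p33_add_k
  by linarith

end

context bipartite_diameter3_graph
begin

lemma distance_regular_imp_bipartite_drg3:
  assumes "distance_regular V E"
  obtains k c where "bipartite_drg3 V E A k c"
proof -
  have regular: "\<forall>i. \<exists>c a b. \<forall>v\<in>V. \<forall>w\<in>V. d v w = i \<longrightarrow>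
      card {x\<in>V. E w x \<and> d v x + 1 = i} = c \<and> card {x\<in>V. E w x \<and> d v x = i} = a \<and>
      card {x\<in>V. E w x \<and> d v x = i + 1} = b"
    using assms unfolding distance_regular_def by blast
  obtain k where k: "\<And>v. v \<in> V \<Longrightarrow> card {x\<in>V. E v x \<and> d v x = 1} = k"
    using spec[OF regular, of 0] dist_eq_0_iff by fastforce
  obtain c where c: "\<And>v w. v \<in> V \<Longrightarrow> w \<in> V \<Longrightarrow> d v w = 2 \<Longrightarrow> card {x\<in>V. E w x \<and> d v x = 1} = c"
    using spec[OF regular, of 2] by fastforce
  have "bipartite_drg3 V E A k c"
  proof unfold_locales
    show "card (nbhd u) = k" if "u \<in> V" for u
    proof -
      have "{x\<in>V. E u x \<and> d u x = 1} = nbhd u"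
        using dist_eq_1_iff[OF that] unfolding nbhd_def by blast
      then show ?thesis using k[OF that] by simp
    qed
    show "card (nbhd u \<inter> nbhd w) = c" if "u \<in> V" "w \<in> V" "d u w = 2" for u w
    proof -
      have "{x\<in>V. E w x \<and> d u x = 1} = nbhd u \<inter> nbhd w"
        using dist_eq_1_iff[OF that(1)] unfolding nbhd_def by blast
      then show ?thesis using c[OF that] by simp
    qed
  qed
  then show ?thesis by (rule that)
qed

end

context bipartite_drg3
begin

lemma card_V_le_12_moved_of_automorphism:
  assumes "0 < p33" and "automorphism V E s" and "x \<in> V" "s x \<noteq> x"
  shows "card V \<le> 12 * card {z\<in>V. s z \<noteq> z}"
proof (cases "\<exists>w\<in>V. s w = w")
  case True
  then obtain w where "w \<in> V" "s w = w" by blast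
  then interpret bipartite_drg3_automorphism V E A k c s w
    using assms(2) by unfold_locales
  show ?thesis using card_V_le_12_moved assms by blast
next
  case False
  then have "{z\<in>V. s z \<noteq> z} = V" by blast
  then show ?thesis by simp
qed

end

theorem proposition5p8:
  fixes V :: "'a set" and E :: "'a \<Rightarrow> 'a \<Rightarrow> bool"
  assumes "distance_regular V E"
    and "bipartite V E"
    and "diameter V E = 3"
    and "\<not> cocktail_party V E"
  shows "enat (card V) \<le> 12 * motion V E"
proof -
  obtain A where "A \<subseteq> V" "\<forall>x y. E x y \<longrightarrow> (x \<in> A \<longleftrightarrow> y \<notin> A)"
    using assms(2) unfolding bipartite_def by blast
  then interpret bipartite_diameter3_graph V E A
    using assms(1,3) unfolding distance_regular_def by unfold_locales auto
  obtain k c where "bipartite_drg3 V E A k c" using distance_regular_imp_bipartite_drg3 assms(1) .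
  then interpret bipartite_drg3 V E A k c .
  have "0 < p33" using cocktail_party_if_p33_eq_0 assms(4) by blast
  then show ?thesis unfolding motion_def numeral_eq_enat
    by (intro enat_le_mult_INF) (auto intro: card_V_le_12_moved_of_automorphism)
qed

end
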